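(* Let $n\ge 2$ and let $Q_n$ be the $n$-dimensional discrete binary cube. (a) $crx_1(Q_n)=4$. (b) $crx_2(Q_n)=crx_3(Q_n)=2n$. (c) $crx_k(Q_n)=2^n$ for $2^{n-1}\le k\le 2^n$.
   Context: $Q_n$ has vertex set $\{0,1\}^n$, two vectors adjacent iff they differ in exactly one coordinate. An edge-coloured cycle is rainbow if its edges have distinct colours. For a graph $G$ in which any $k$ vertices lie on a common cycle, $crx_k(G)$ is the minimum number of colours in an edge-colouring of $G$ such that every set of $k$ vertices of $G$ lies in some rainbow cycle. *)

theory Defs
  imports Main
begin

text \<open>A graph is given by a vertex set V and a set E of edges, each edge a 2-element set.\<close>

definition is_cycle :: "'a set set \<Rightarrow> 'a list \<Rightarrow> bool" where
  "is_cycle E vs \<longleftrightarrow> length vs \<ge> 3 \<and> distinct vs \<and>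
     (\<forall>i < length vs. {vs ! i, vs ! ((i + 1) mod length vs)} \<in> E)"

definition cycle_edges :: "'a list \<Rightarrow> 'a set set" where
  "cycle_edges vs = {{vs ! i, vs ! ((i + 1) mod length vs)} | i. i < length vs}"

definition rainbow :: "('a set \<Rightarrow> nat) \<Rightarrow> 'a list \<Rightarrow> bool" where
  "rainbow c vs \<longleftrightarrow> inj_on c (cycle_edges vs)"

definition crx :: "'a set \<Rightarrow> 'a set set \<Rightarrow> nat \<Rightarrow> nat" where
  "crx V E k = (LEAST m. \<exists>c :: 'a set \<Rightarrow> nat. (\<forall>e \<in> E. c e < m) \<and>
      (\<forall>S. S \<subseteq> V \<and> card S = k \<longrightarrow>
         (\<exists>vs. is_cycle E vs \<and> S \<subseteq> set vs \<and> rainbow c vs)))"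

definition cube_verts :: "nat \<Rightarrow> bool list set" where
  "cube_verts n = {xs. length xs = n}"

definition cube_adj :: "bool list \<Rightarrow> bool list \<Rightarrow> bool" where
  "cube_adj xs ys \<longleftrightarrow> length xs = length ys \<and> card {i. i < length xs \<and> xs ! i \<noteq> ys ! i} = 1"

definition cube_edges :: "nat \<Rightarrow> bool list set set" where
  "cube_edges n = {{u, v} | u v. u \<in> cube_verts n \<and> v \<in> cube_verts n \<and> cube_adj u v}"

end

theory Submission
  imports Defs "HOL-Library.Product_Lexorder"
begin

text \<open>
  A rainbow cycle with \<open>m\<close> colours has at most \<open>m\<close> edges, so each lower bound amounts to a
  lower bound on the length of the cycles through a suitable vertex set. The cube has no triangles; a cycle through
  two antipodal vertices changes every coordinate on both arcs between them, so it has length at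
  least \<open>2 * n\<close>; and consecutive vertices of a cycle have opposite parity, so a cycle through all
  \<open>2 ^ (n - 1)\<close> even vertices has length at least \<open>2 ^ n\<close>.

  For the upper bounds, the reflected Gray code is a Hamiltonian cycle, rainbow once its edges
  are numbered. For \<open>k \<le> 3\<close>, pair up the coordinates and colour an edge in direction \<open>i\<close> by
  \<open>2 * i\<close> or \<open>2 * i + 1\<close> according to the bit of its endpoints at the partner of \<open>i\<close>. A cycle of
  length \<open>2 * n\<close> that flips all coordinates in one order and then flips them back in another is
  rainbow as soon as every coordinate is preceded by its partner in both orders or in neither.
  Choosing the two orders according to how three given vertices compare at each coordinate puts
  all three of them on the cycle. For \<open>k = 1\<close> a square in the first two directions suffices.
\<close>

section \<open>Rainbow cycles\<close>

lemma cycle_edge_inj_on: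
  assumes "is_cycle E vs"
  shows "inj_on (\<lambda>i. {vs ! i, vs ! ((i + 1) mod length vs)}) {..<length vs}"
proof (rule inj_onI)
  fix i j assume "i \<in> {..<length vs}" "j \<in> {..<length vs}"
    and eq: "{vs ! i, vs ! ((i + 1) mod length vs)} = {vs ! j, vs ! ((j + 1) mod length vs)}"
  define L where "L = length vs"
  have L: "3 \<le> L" "distinct vs" "i < L" "j < L"
    using assms \<open>i \<in> _\<close> \<open>j \<in> _\<close> unfolding is_cycle_def L_def by auto
  have nth_inj: "vs ! k = vs ! l \<Longrightarrow> k = l" if "k < L" "l < L" for k l
    using L(2) that nth_eq_iff_index_eq L_def by metis
  show "i = j"
  proof (rule ccontr)
    assume "i \<noteq> j"
    then have "vs ! i = vs ! ((j + 1) mod L)" "vs ! ((i + 1) mod L) = vs ! j"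
      using eq nth_inj L unfolding L_def by (auto simp: doubleton_eq_iff)
    then have "i = (j + 1) mod L" "(i + 1) mod L = j"
      using nth_inj L by auto
    then have "(j + 2) mod L = j"
      by (simp add: mod_Suc_eq)
    then show False
      using L by (cases "j + 2 < L") (auto simp: mod_if split: if_splits)
  qed
qed

lemma cycle_edges_eq_image:
  "cycle_edges vs = (\<lambda>i. {vs ! i, vs ! ((i + 1) mod length vs)}) ` {..<length vs}"
  unfolding cycle_edges_def by auto

lemma cycle_edges_subset: "is_cycle E vs \<Longrightarrow> cycle_edges vs \<subseteq> E"
  unfolding is_cycle_def cycle_edges_def by auto

lemma rainbow_iff_distinct_colours:
  assumes "is_cycle E vs"
  shows "rainbow c vs \<longleftrightarrow>
    distinct (map (\<lambda>i. c {vs ! i, vs ! ((i + 1) mod length vs)}) [0..<length vs])"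
  unfolding rainbow_def cycle_edges_eq_image distinct_map
  using comp_inj_on_iff[OF cycle_edge_inj_on[OF assms]] by (simp add: lessThan_atLeast0 comp_def)

lemma rainbow_cycle_length_le:
  assumes "is_cycle E vs" "rainbow c vs" "\<forall>e\<in>E. c e < m"
  shows "length vs \<le> m"
proof -
  have "length vs = card (c ` cycle_edges vs)"
    using assms(1,2) card_image[of c "cycle_edges vs"] card_image[OF cycle_edge_inj_on[OF assms(1)]]
    unfolding rainbow_def cycle_edges_eq_image by simp
  also have "\<dots> \<le> card {..<m}"
    using cycle_edges_subset[OF assms(1)] assms(3) by (intro card_mono) auto
  finally show ?thesis by simp
qed

lemma rainbow_colouring_of_cycle:
  assumes "is_cycle E vs"
  shows "\<exists>c. (\<forall>e\<in>E. c e < length vs) \<and> rainbow c vs"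
proof -
  define edge where "edge i = {vs ! i, vs ! ((i + 1) mod length vs)}" for i
  define c where "c e = (if e \<in> cycle_edges vs then inv_into {..<length vs} edge e else 0)" for e
  have "c e < length vs" for e
    using inv_into_into[of e edge "{..<length vs}"] assms
    unfolding c_def cycle_edges_eq_image edge_def is_cycle_def by auto
  moreover have "rainbow c vs"
    unfolding rainbow_def using inj_on_inv_into[of "cycle_edges vs" edge "{..<length vs}"]
    by (simp add: c_def inj_on_def cycle_edges_eq_image edge_def)
  ultimately show ?thesis by blast
qed

lemma crx_eqI:
  assumes "\<forall>e\<in>E. c e < m" "\<forall>S. S \<subseteq> V \<and> card S = k \<longrightarrow> (\<exists>vs. is_cycle E vs \<and> S \<subseteq> set vs \<and> rainbow c vs)"
    and "T \<subseteq> V" "card T = k" "\<And>vs. is_cycle E vs \<Longrightarrow> T \<subseteq> set vs \<Longrightarrow> m \<le> length vs"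
  shows "crx V E k = m"
  unfolding crx_def
proof (rule Least_equality)
  fix m' assume "\<exists>c. (\<forall>e\<in>E. c e < m') \<and>
    (\<forall>S. S \<subseteq> V \<and> card S = k \<longrightarrow> (\<exists>vs. is_cycle E vs \<and> S \<subseteq> set vs \<and> rainbow c vs))"
  then obtain c' vs where "\<forall>e\<in>E. c' e < m'" "is_cycle E vs" "T \<subseteq> set vs" "rainbow c' vs"
    using assms(3,4) by blast
  then show "m \<le> m'"
    using assms(5) rainbow_cycle_length_le le_trans by blast
qed (use assms(1,2) in blast)


section \<open>Cycles in the cube\<close>

definition diff_coords :: "bool list \<Rightarrow> bool list \<Rightarrow> nat \<Rightarrow> nat set" where
  "diff_coords x y n = {i. i < n \<and> x ! i \<noteq> y ! i}"

lemma diff_coords_commute: "diff_coords x y n = diff_coords y x n"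
  unfolding diff_coords_def by auto

lemma cube_edgeI: "x \<in> cube_verts n \<Longrightarrow> y \<in> cube_verts n \<Longrightarrow> cube_adj x y \<Longrightarrow> {x, y} \<in> cube_edges n"
  unfolding cube_edges_def by blast

lemma cube_adj_iff_diff_coords: "cube_adj x y \<longleftrightarrow> length x = length y \<and> card (diff_coords x y (length x)) = 1"
  unfolding cube_adj_def diff_coords_def by simp

lemma cube_edge_iff:
  "{x, y} \<in> cube_edges n \<longleftrightarrow> length x = n \<and> length y = n \<and> card (diff_coords x y n) = 1"
proof
  assume "{x, y} \<in> cube_edges n"
  then obtain u v where "{x, y} = {u, v}" "length u = n" "length v = n" "card (diff_coords u v n) = 1"
    unfolding cube_edges_def cube_verts_def cube_adj_def diff_coords_def by auto
  then show "length x = n \<and> length y = n \<and> card (diff_coords x y n) = 1"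
    by (auto simp: doubleton_eq_iff diff_coords_commute)
next
  assume "length x = n \<and> length y = n \<and> card (diff_coords x y n) = 1"
  then have "x \<in> cube_verts n" "y \<in> cube_verts n" "cube_adj x y"
    unfolding cube_verts_def cube_adj_def diff_coords_def by simp_all
  then show "{x, y} \<in> cube_edges n"
    by (rule cube_edgeI)
qed

lemma cube_cycle_step:
  assumes "is_cycle (cube_edges n) vs" "i < length vs"
  shows "length (vs ! i) = n" "length (vs ! ((i + 1) mod length vs)) = n"
    and "card (diff_coords (vs ! i) (vs ! ((i + 1) mod length vs)) n) = 1"
  using assms cube_edge_iff unfolding is_cycle_def by blast+

lemma not_adjacent_at_distance_two:
  assumes "card (diff_coords x y n) = 1" "card (diff_coords y z n) = 1"
  shows "card (diff_coords x z n) \<noteq> 1"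
proof -
  obtain i j where ij: "diff_coords x y n = {i}" "diff_coords y z n = {j}"
    using assms card_1_singletonE by metis
  then have "diff_coords x z n = ({i} - {j}) \<union> ({j} - {i})"
    unfolding diff_coords_def by (auto simp: set_eq_iff)
  then show ?thesis
    by (cases "i = j") auto
qed

lemma cube_cycle_length_ge_4:
  assumes "is_cycle (cube_edges n) vs"
  shows "4 \<le> length vs"
proof (rule ccontr)
  assume "\<not> 4 \<le> length vs"
  with assms have L: "length vs = 3"
    unfolding is_cycle_def by auto
  have "card (diff_coords (vs ! 0) (vs ! 1) n) = 1" "card (diff_coords (vs ! 1) (vs ! 2) n) = 1"
    "card (diff_coords (vs ! 0) (vs ! 2) n) = 1"
    using cube_cycle_step(3)[OF assms, of 0] cube_cycle_step(3)[OF assms, of 1]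
      cube_cycle_step(3)[OF assms, of 2] L by (simp_all add: diff_coords_commute numeral_2_eq_2)
  then show False
    using not_adjacent_at_distance_two by blast
qed

lemma exists_change_between:
  assumes "p \<le> q" "f p \<noteq> f q"
  shows "\<exists>t. p \<le> t \<and> t < q \<and> f t \<noteq> f (Suc t)"
  using assms
proof (induction q)
  case (Suc q)
  then have "p \<le> q"
    by (metis le_SucE)
  show ?case
  proof (cases "f p = f q")
    case True
    then show ?thesis
      using \<open>p \<le> q\<close> Suc.prems(2) by (intro exI[of _ q]) simp
  next
    case False
    then show ?thesis
      using \<open>p \<le> q\<close> Suc.IH less_SucI by blast
  qed
qed simp

definition coord_changes :: "bool list list \<Rightarrow> nat \<Rightarrow> nat set" where
  "coord_changes vs j = {t. t < length vs \<and> vs ! t ! j \<noteq> vs ! ((t + 1) mod length vs) ! j}"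

text \<open>The two arcs of the cycle between positions \<open>p\<close> and \<open>q\<close> both have to change
  coordinate \<open>j\<close>.\<close>
lemma two_le_card_coord_changes:
  assumes "p < q" "q < length vs" "vs ! p ! j \<noteq> vs ! q ! j"
  shows "2 \<le> card (coord_changes vs j)"
proof -
  define L where "L = length vs"
  define f where "f t = vs ! (t mod L) ! j" for t
  have "0 < L" "p < L" "q < L"
    using assms(1,2) unfolding L_def by linarith+
  have change: "t mod L \<in> coord_changes vs j" if "f t \<noteq> f (Suc t)" for t
    using that \<open>0 < L\<close> unfolding f_def coord_changes_def L_def by (simp add: mod_Suc_eq)
  have "f p \<noteq> f q" "f (L + p) = f p"
    using assms(3) \<open>p < L\<close> \<open>q < L\<close> unfolding f_def by simp_all
  obtain t1 where t1: "p \<le> t1" "t1 < q" "f t1 \<noteq> f (Suc t1)"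
    using exists_change_between[OF less_imp_le[OF assms(1)] \<open>f p \<noteq> f q\<close>] by blast
  have "q \<le> L + p" "f q \<noteq> f (L + p)"
    using \<open>q < L\<close> \<open>f p \<noteq> f q\<close> \<open>f (L + p) = f p\<close> by simp_all
  then obtain t2 where t2: "q \<le> t2" "t2 < L + p" "f t2 \<noteq> f (Suc t2)"
    using exists_change_between[of q "L + p" f] by blast
  have "t2 mod L \<noteq> t1"
  proof (cases "t2 < L")
    case True
    then show ?thesis using t1(2) t2(1) by simp
  next
    case False
    then have "t2 mod L = t2 - L"
      using t2(2) \<open>p < L\<close> by (simp add: le_mod_geq)
    then show ?thesis using t1(1) t2(2) False by linarith
  qed
  moreover have "t1 mod L = t1"
    using t1(2) \<open>q < L\<close> by simp
  ultimately have "{t1, t2 mod L} \<subseteq> coord_changes vs j" "card {t1, t2 mod L} = 2"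
    using change[OF t1(3)] change[OF t2(3)] by simp_all
  moreover have "finite (coord_changes vs j)"
    unfolding coord_changes_def by simp
  ultimately show ?thesis
    using card_mono by metis
qed

lemma cube_cycle_length_ge_antipodal:
  assumes cycle: "is_cycle (cube_edges n) vs" and "a \<in> set vs" "b \<in> set vs"
    and antipodal: "\<forall>j<n. a ! j \<noteq> b ! j"
  shows "2 * n \<le> length vs"
proof -
  obtain p q where pq: "p < length vs" "q < length vs" "vs ! p = a" "vs ! q = b"
    using assms(2,3) by (meson in_set_conv_nth)
  have two: "2 \<le> card (coord_changes vs j)" if "j < n" for j
  proof -
    have "vs ! p ! j \<noteq> vs ! q ! j"
      using antipodal that pq by simp
    moreover have "p \<noteq> q"
      using calculation by auto
    ultimately have "vs ! min p q ! j \<noteq> vs ! max p q ! j" "min p q < max p q"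
      by (auto simp: min_def max_def)
    then show ?thesis
      using two_le_card_coord_changes pq by (metis max_def)
  qed
  have same_coord: "j = j'"
    if "j < n" "j' < n" "t \<in> coord_changes vs j" "t \<in> coord_changes vs j'" for j j' t
  proof -
    define x y where "x = vs ! t" and "y = vs ! ((t + 1) mod length vs)"
    have "card (diff_coords x y n) = 1"
      using that(3) cube_cycle_step(3)[OF cycle] unfolding coord_changes_def x_def y_def by simp
    moreover have "j \<in> diff_coords x y n" "j' \<in> diff_coords x y n"
      using that unfolding coord_changes_def diff_coords_def x_def y_def by simp_all
    ultimately show ?thesis
      by (metis card_1_singletonE singletonD)
  qed
  then have disjoint: "coord_changes vs j \<inter> coord_changes vs j' = {}"
    if "j < n" "j' < n" "j \<noteq> j'" for j j'
    using that by blast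
  have "2 * n = (\<Sum>j<n. 2)"
    by simp
  also have "\<dots> \<le> (\<Sum>j<n. card (coord_changes vs j))"
    using two by (intro sum_mono) simp
  also have "\<dots> = card (\<Union>j<n. coord_changes vs j)"
    using disjoint by (intro card_UN_disjoint[symmetric]) (auto simp: coord_changes_def)
  also have "\<dots> \<le> card {..<length vs}"
    by (intro card_mono) (auto simp: coord_changes_def)
  finally show ?thesis
    by simp
qed

lemma card_cube_verts: "card (cube_verts n) = 2 ^ n"
  using card_lists_length_eq[of "UNIV :: bool set" n] by (simp add: cube_verts_def)

lemma finite_cube_verts: "finite (cube_verts n)"
  using card_cube_verts by (metis card.infinite power_not_zero zero_neq_numeral)

definition flip_coord :: "nat \<Rightarrow> bool list \<Rightarrow> bool list" where
  "flip_coord i x = x[i := \<not> x ! i]"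

lemma length_flip_coord [simp]: "length (flip_coord i x) = length x"
  unfolding flip_coord_def by simp

lemma nth_flip_coord: "j < length x \<Longrightarrow> flip_coord i x ! j = (if j = i then \<not> x ! i else x ! j)"
  unfolding flip_coord_def by (simp add: nth_list_update)

lemma diff_coords_flip_coord:
  "length x = n \<Longrightarrow> i < n \<Longrightarrow> diff_coords x (flip_coord i x) n = {i}"
  unfolding diff_coords_def by (auto simp: nth_flip_coord split: if_splits)

lemma flip_coord_flip_coord [simp]: "flip_coord i (flip_coord i x) = x"
  unfolding flip_coord_def by (cases "i < length x") (auto simp: list_update_beyond not_less)

lemma eq_flip_coord_if_diff_coords:
  assumes "length x = n" "length y = n" "diff_coords x y n = {i}"
  shows "y = flip_coord i x"
proof (rule nth_equalityI)
  fix j assume "j < length y"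
  then show "y ! j = flip_coord i x ! j"
    using assms unfolding diff_coords_def by (auto simp: nth_flip_coord set_eq_iff)
qed (use assms in simp)

definition even_weight :: "bool list \<Rightarrow> bool" where
  "even_weight x \<longleftrightarrow> even (card {i. i < length x \<and> x ! i})"

lemma even_weight_flip_coord:
  assumes "i < length x"
  shows "even_weight (flip_coord i x) \<longleftrightarrow> \<not> even_weight x"
proof -
  define S where "S = {j. j < length x \<and> x ! j}"
  have "finite S"
    unfolding S_def by simp
  show ?thesis
  proof (cases "x ! i")
    case True
    then have "{j. j < length x \<and> flip_coord i x ! j} = S - {i}"
      unfolding S_def by (auto simp: nth_flip_coord split: if_split_asm)
    moreover have "card S = Suc (card (S - {i}))"
      using True assms \<open>finite S\<close> card_Suc_Diff1[of S i] unfolding S_def by simp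
    ultimately show ?thesis
      unfolding even_weight_def S_def by simp
  next
    case False
    then have "{j. j < length x \<and> flip_coord i x ! j} = insert i S"
      using assms unfolding S_def by (auto simp: nth_flip_coord)
    moreover have "i \<notin> S"
      using False unfolding S_def by simp
    ultimately show ?thesis
      using \<open>finite S\<close> unfolding even_weight_def S_def by simp
  qed
qed

lemma even_weight_neq_if_adjacent:
  assumes "length x = n" "length y = n" "card (diff_coords x y n) = 1"
  shows "even_weight x \<noteq> even_weight y"
proof -
  obtain i where i: "diff_coords x y n = {i}"
    using assms(3) card_1_singletonE by blast
  then have "i < length x"
    using assms(1) unfolding diff_coords_def by auto
  then show ?thesis
    using eq_flip_coord_if_diff_coords[OF assms(1,2) i] even_weight_flip_coord by simp
qed

definition even_vertices :: "nat \<Rightarrow> bool list set" where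
  "even_vertices n = {x \<in> cube_verts n. even_weight x}"

lemma card_even_vertices:
  assumes "1 \<le> n"
  shows "card (even_vertices n) = 2 ^ (n - 1)"
proof -
  define odd_vertices where "odd_vertices = {x \<in> cube_verts n. \<not> even_weight x}"
  have flip: "flip_coord 0 x \<in> cube_verts n \<and> (even_weight (flip_coord 0 x) \<longleftrightarrow> \<not> even_weight x)"
    if "x \<in> cube_verts n" for x
    using that assms even_weight_flip_coord[of 0 x] unfolding cube_verts_def by simp
  then have flip_maps: "flip_coord 0 ` even_vertices n \<subseteq> odd_vertices"
    "flip_coord 0 ` odd_vertices \<subseteq> even_vertices n"
    unfolding even_vertices_def odd_vertices_def by auto
  have "bij_betw (flip_coord 0) (even_vertices n) odd_vertices"
    by (rule bij_betw_byWitness[where f' = "flip_coord 0"]) (use flip_maps in auto)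
  then have same_card: "card (even_vertices n) = card odd_vertices"
    by (rule bij_betw_same_card)
  have "even_vertices n \<union> odd_vertices = cube_verts n"
    "even_vertices n \<inter> odd_vertices = {}"
    unfolding even_vertices_def odd_vertices_def by auto
  moreover have "finite (even_vertices n)" "finite odd_vertices"
    using finite_cube_verts[of n] unfolding even_vertices_def odd_vertices_def by simp_all
  ultimately have "card (even_vertices n) + card odd_vertices = 2 ^ n"
    using card_Un_disjoint[of "even_vertices n" odd_vertices] by (simp add: card_cube_verts)
  then show ?thesis
    using same_card assms by (cases n) auto
qed

text \<open>Consecutive vertices of a cycle in the cube have opposite parity, so the step
  \<open>i \<mapsto> i + 1\<close> injects the positions of even vertices into those of odd ones.\<close>
lemma cube_cycle_length_ge_even_vertices:
  assumes cycle: "is_cycle (cube_edges n) vs" and "even_vertices n \<subseteq> set vs"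
  shows "2 * card (even_vertices n) \<le> length vs"
proof -
  define L where "L = length vs"
  define I where "I = {i. i < L \<and> even_weight (vs ! i)}"
  define J where "J = {i. i < L \<and> \<not> even_weight (vs ! i)}"
  define succ where "succ i = (i + 1) mod L" for i
  have succ_eq: "succ i = (if i + 1 = L then 0 else i + 1)" if "i < L" for i
    using that unfolding succ_def by simp
  have "inj_on succ I"
    unfolding I_def inj_on_def by (auto simp: succ_eq split: if_splits)
  moreover have "succ ` I \<subseteq> J"
  proof
    fix j assume "j \<in> succ ` I"
    then obtain i where "i \<in> I" "j = succ i" by blast
    then have "i < L" "even_weight (vs ! i)" "j < L"
      unfolding I_def by (auto simp: succ_eq)
    moreover have "even_weight (vs ! i) \<noteq> even_weight (vs ! j)"
      using even_weight_neq_if_adjacent[OF cube_cycle_step[OF cycle \<open>i < L\<close>[unfolded L_def]]]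
        \<open>j = succ i\<close> unfolding succ_def L_def by simp
    ultimately show "j \<in> J"
      unfolding J_def by simp
  qed
  ultimately have "card I \<le> card J"
    by (rule card_inj_on_le) (simp add: J_def)
  moreover have "I \<union> J = {..<L}" "I \<inter> J = {}"
    unfolding I_def J_def by auto
  then have "card I + card J = L"
    using card_Un_disjoint[of I J] by (simp add: I_def J_def)
  moreover have "even_vertices n \<subseteq> (\<lambda>i. vs ! i) ` I"
  proof
    fix x assume x: "x \<in> even_vertices n"
    then obtain i where "i < L" "x = vs ! i"
      using assms(2) unfolding L_def by (metis in_set_conv_nth subsetD)
    then show "x \<in> (\<lambda>i. vs ! i) ` I"
      using x unfolding I_def even_vertices_def by blast
  qed
  then have "card (even_vertices n) \<le> card I"
    using surj_card_le[of I] unfolding I_def by simp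
  ultimately show ?thesis
    unfolding L_def by linarith
qed

section \<open>The reflected Gray code\<close>

fun gray_code :: "nat \<Rightarrow> bool list list" where
  "gray_code 0 = [[]]"
| "gray_code (Suc n) = map (Cons False) (gray_code n) @ map (Cons True) (rev (gray_code n))"

lemma length_gray_code: "length (gray_code n) = 2 ^ n"
  by (induction n) auto

lemma gray_code_ne: "gray_code n \<noteq> []"
  using length_gray_code[of n] by auto

lemma distinct_gray_code: "distinct (gray_code n)"
  by (induction n) (auto simp: distinct_map)

lemma set_gray_code: "set (gray_code n) = cube_verts n"
proof -
  have "set (gray_code n) \<subseteq> cube_verts n"
    by (induction n) (auto simp: cube_verts_def)
  moreover have "card (set (gray_code n)) = card (cube_verts n)"
    using distinct_card[OF distinct_gray_code] by (simp add: length_gray_code card_cube_verts)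
  ultimately show ?thesis
    using finite_cube_verts by (metis card_subset_eq)
qed

lemma hd_gray_code: "hd (gray_code n) = replicate n False"
  by (induction n) (auto simp: gray_code_ne hd_map)

lemma last_gray_code: "last (gray_code (Suc n)) = True # replicate n False"
  by (simp add: gray_code_ne last_map hd_gray_code last_rev)

lemma cube_adj_Cons_iff: "cube_adj (b # x) (b # y) \<longleftrightarrow> cube_adj x y"
proof -
  have "{i. i < Suc (length x) \<and> (b # x) ! i \<noteq> (b # y) ! i} = Suc ` {i. i < length x \<and> x ! i \<noteq> y ! i}"
    by (auto simp: nth_Cons' image_iff gr0_conv_Suc)
  then show ?thesis
    unfolding cube_adj_def by (simp add: card_image)
qed

lemma cube_adj_commute: "cube_adj x y \<longleftrightarrow> cube_adj y x"
  unfolding cube_adj_iff_diff_coords by (metis diff_coords_commute)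

lemma cube_adj_Cons_False_True: "cube_adj (False # x) (True # x)"
proof -
  have "{i. i < Suc (length x) \<and> (False # x) ! i \<noteq> (True # x) ! i} = {0}"
    by (auto simp: nth_Cons')
  then show ?thesis
    unfolding cube_adj_def by simp
qed

lemma successively_cube_adj_gray_code: "successively cube_adj (gray_code n)"
proof (induction n)
  case (Suc n)
  have "successively (\<lambda>x y. cube_adj y x) (gray_code n)"
    using Suc.IH by (rule successively_mono) (metis cube_adj_commute)
  then have "successively cube_adj (map (Cons True) (rev (gray_code n)))"
    by (simp add: successively_map successively_rev cube_adj_Cons_iff)
  moreover have "successively cube_adj (map (Cons False) (gray_code n))"
    using Suc.IH by (simp add: successively_map cube_adj_Cons_iff)
  moreover have "cube_adj (last (map (Cons False) (gray_code n))) (hd (map (Cons True) (rev (gray_code n))))"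
    using gray_code_ne by (simp add: last_map hd_map hd_rev cube_adj_Cons_False_True)
  ultimately show ?case
    by (simp add: successively_append_iff)
qed simp

lemma is_cycle_gray_code:
  assumes "2 \<le> n"
  shows "is_cycle (cube_edges n) (gray_code n)"
proof -
  define L where "L = length (gray_code n)"
  have "4 \<le> L"
    using power_increasing[OF assms, of "2::nat"] unfolding L_def length_gray_code by simp
  have adj: "cube_adj (gray_code n ! i) (gray_code n ! ((i + 1) mod L))" if "i < L" for i
  proof (cases "i + 1 < L")
    case True
    then show ?thesis
      using successively_nth[OF successively_cube_adj_gray_code] unfolding L_def by simp
  next
    case False
    obtain m where m: "n = Suc m"
      using assms by (cases n) auto
    have "i + 1 = L"
      using False that by simp
    then have "i = L - 1" "(i + 1) mod L = 0"
      by simp_all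
    then have "gray_code n ! i = last (gray_code n)" "gray_code n ! ((i + 1) mod L) = hd (gray_code n)"
      using gray_code_ne unfolding L_def by (simp_all add: last_conv_nth hd_conv_nth)
    moreover have "last (gray_code n) = True # replicate m False" "hd (gray_code n) = False # replicate m False"
      unfolding m by (rule last_gray_code, simp only: hd_gray_code replicate_Suc)
    ultimately show ?thesis
      using cube_adj_Cons_False_True cube_adj_commute by simp
  qed
  have "{gray_code n ! i, gray_code n ! ((i + 1) mod L)} \<in> cube_edges n" if "i < L" for i
  proof (rule cube_edgeI)
    have "(i + 1) mod L < L"
      using \<open>4 \<le> L\<close> by simp
    then show "gray_code n ! i \<in> cube_verts n" "gray_code n ! ((i + 1) mod L) \<in> cube_verts n"
      using that set_gray_code[of n] nth_mem unfolding L_def by blast+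
  qed (rule adj[OF that])
  then show ?thesis
    unfolding is_cycle_def using \<open>4 \<le> L\<close> distinct_gray_code unfolding L_def by simp
qed

section \<open>Rainbow cycles through three vertices\<close>

definition edge_dir :: "bool list set \<Rightarrow> nat" where
  "edge_dir e = (LEAST i. \<exists>x\<in>e. \<exists>y\<in>e. i < length x \<and> x ! i \<noteq> y ! i)"

text \<open>An edge in direction \<open>i\<close> gets colour \<open>2 * i\<close> or \<open>2 * i + 1\<close>, according to the bit
  that both of its endpoints carry at the partner coordinate \<open>g i\<close>.\<close>
definition edge_colour :: "(nat \<Rightarrow> nat) \<Rightarrow> bool list set \<Rightarrow> nat" where
  "edge_colour g e = 2 * edge_dir e + (if \<exists>x\<in>e. x ! g (edge_dir e) then 1 else 0)"

lemma edge_dir_eq: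
  assumes "length x = n" "length y = n" "diff_coords x y n = {i}"
  shows "edge_dir {x, y} = i"
proof -
  have "(\<exists>a\<in>{x, y}. \<exists>b\<in>{x, y}. j < length a \<and> a ! j \<noteq> b ! j) \<longleftrightarrow> j \<in> diff_coords x y n" for j
    using assms(1,2) unfolding diff_coords_def by auto
  then show ?thesis
    unfolding edge_dir_def using assms(3) by (intro Least_equality) auto
qed

lemma edge_colour_eq:
  assumes "length x = n" "length y = n" "diff_coords x y n = {i}" "g i \<noteq> i" "g i < n"
  shows "edge_colour g {x, y} = 2 * i + (if x ! g i then 1 else 0)"
proof -
  have "x ! g i = y ! g i"
    using assms(3-5) unfolding diff_coords_def by blast
  then show ?thesis
    unfolding edge_colour_def edge_dir_eq[OF assms(1-3)] by auto
qed

lemma edge_colour_less: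
  assumes "e \<in> cube_edges n"
  shows "edge_colour g e < 2 * n"
proof -
  obtain x y where e: "e = {x, y}" "length x = n" "length y = n" "card (diff_coords x y n) = 1"
    using assms cube_edge_iff unfolding cube_edges_def by blast
  then obtain i where i: "diff_coords x y n = {i}"
    using card_1_singletonE by blast
  then have "i < n"
    unfolding diff_coords_def by auto
  then show ?thesis
    unfolding edge_colour_def e(1) edge_dir_eq[OF e(2,3) i] by auto
qed

lemma card_less_of_bij:
  assumes "bij_betw f {..<n} {..<n}" "k \<le> n"
  shows "card {i. i < n \<and> f i < k} = k"
proof -
  have "f ` {i. i < n \<and> f i < k} = {..<k}"
  proof
    show "f ` {i. i < n \<and> f i < k} \<subseteq> {..<k}"
      by auto
    show "{..<k} \<subseteq> f ` {i. i < n \<and> f i < k}"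
    proof
      fix j assume "j \<in> {..<k}"
      then have "j \<in> f ` {..<n}"
        using assms unfolding bij_betw_def by auto
      then show "j \<in> f ` {i. i < n \<and> f i < k}"
        using \<open>j \<in> {..<k}\<close> by auto
    qed
  qed
  moreover have "{i. i < n \<and> f i < k} \<subseteq> {..<n}"
    by auto
  then have "inj_on f {i. i < n \<and> f i < k}"
    using assms(1) inj_on_subset unfolding bij_betw_def by blast
  ultimately show ?thesis
    by (metis card_image card_lessThan)
qed

text \<open>Starting from \<open>w\<close>, the first \<open>n\<close> steps flip coordinate \<open>i\<close> at step \<open>p i\<close> and the
  last \<open>n\<close> steps flip it back at step \<open>n + q i\<close>. Direction \<open>i\<close> is thus used twice, and
  \<open>partner_order\<close> says exactly that the bit at \<open>g i\<close> differs between the two uses, so the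
  cycle is rainbow for \<open>edge_colour g\<close>. A coordinate \<open>h\<close> flipped last on the way out and
  last on the way back keeps the \<open>2 * n\<close> vertices distinct.\<close>
locale flip_cycle =
  fixes n :: nat and p q :: "nat \<Rightarrow> nat" and w :: "nat \<Rightarrow> bool" and g :: "nat \<Rightarrow> nat" and h :: nat
  assumes two_le_n: "2 \<le> n"
    and bij_p: "bij_betw p {..<n} {..<n}" and bij_q: "bij_betw q {..<n} {..<n}"
    and h: "h < n" "p h = n - 1" "q h = n - 1"
    and g_partner: "\<And>i. i < n \<Longrightarrow> g i < n \<and> g i \<noteq> i"
    and partner_order: "\<And>i. i < n \<Longrightarrow> p (g i) < p i \<longleftrightarrow> q (g i) < q i"
begin

definition flipped :: "nat \<Rightarrow> nat set" where
  "flipped k = (if k \<le> n then {i. i < n \<and> p i < k} else {i. i < n \<and> k - n \<le> q i})"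

definition vertex :: "nat \<Rightarrow> bool list" where
  "vertex k = map (\<lambda>j. w j \<noteq> (j \<in> flipped k)) [0..<n]"

definition vertices :: "bool list list" where
  "vertices = map vertex [0..<2 * n]"

definition moved :: "nat \<Rightarrow> nat" where
  "moved k = (if k < n then inv_into {..<n} p k else inv_into {..<n} q (k - n))"

lemma p_less: "i < n \<Longrightarrow> p i < n" and q_less: "i < n \<Longrightarrow> q i < n"
  using bij_p bij_q bij_betwE by blast+

lemma p_eq_iff: "i < n \<Longrightarrow> j < n \<Longrightarrow> p i = p j \<longleftrightarrow> i = j"
  and q_eq_iff: "i < n \<Longrightarrow> j < n \<Longrightarrow> q i = q j \<longleftrightarrow> i = j"
  using bij_p bij_q unfolding bij_betw_def inj_on_def by blast+

lemma flipped_high: "n \<le> k \<Longrightarrow> flipped k = {i. i < n \<and> k - n \<le> q i}"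
  unfolding flipped_def using p_less by auto

lemma flipped_subset: "flipped k \<subseteq> {..<n}"
  unfolding flipped_def by auto

lemma card_flipped_low:
  assumes "k \<le> n"
  shows "card (flipped k) = k"
  using card_less_of_bij[OF bij_p assms] assms unfolding flipped_def by simp

lemma card_flipped_high:
  assumes "n \<le> k" "k \<le> 2 * n"
  shows "card (flipped k) = 2 * n - k"
proof -
  have "flipped k = {..<n} - {i. i < n \<and> q i < k - n}"
    unfolding flipped_high[OF assms(1)] by auto
  moreover have "card ({..<n} - {i. i < n \<and> q i < k - n}) = n - card {i. i < n \<and> q i < k - n}"
    using card_Diff_subset[of "{i. i < n \<and> q i < k - n}" "{..<n}"] by auto
  moreover have "card {i. i < n \<and> q i < k - n} = k - n"
    using card_less_of_bij[OF bij_q] assms by simp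
  ultimately show ?thesis
    using assms by simp
qed

lemma h_in_flipped_iff:
  assumes "k < 2 * n"
  shows "h \<in> flipped k \<longleftrightarrow> n \<le> k"
proof (cases "k \<le> n")
  case True
  then show ?thesis
    using h unfolding flipped_def by auto
next
  case False
  then show ?thesis
    using h assms unfolding flipped_def by auto
qed

lemma flipped_eq_iff:
  assumes "k < 2 * n" "l < 2 * n"
  shows "flipped k = flipped l \<longleftrightarrow> k = l"
proof
  assume eq: "flipped k = flipped l"
  then have "n \<le> k \<longleftrightarrow> n \<le> l"
    using h_in_flipped_iff assms by blast
  moreover have "card (flipped k) = card (flipped l)"
    using eq by simp
  ultimately show "k = l"
    using assms card_flipped_low[of k] card_flipped_low[of l] card_flipped_high[of k]
      card_flipped_high[of l] by (cases "n \<le> k") simp_all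
qed simp

lemma length_vertex [simp]: "length (vertex k) = n"
  unfolding vertex_def by simp

lemma nth_vertex: "j < n \<Longrightarrow> vertex k ! j = (w j \<noteq> (j \<in> flipped k))"
  unfolding vertex_def by simp

lemma vertex_eq_iff:
  assumes "k < 2 * n" "l < 2 * n"
  shows "vertex k = vertex l \<longleftrightarrow> k = l"
proof
  assume eq: "vertex k = vertex l"
  have "j \<in> flipped k \<longleftrightarrow> j \<in> flipped l" if "j < n" for j
    using arg_cong[OF eq, of "\<lambda>x. x ! j"] nth_vertex[OF that] by (cases "w j") simp_all
  then have "flipped k = flipped l"
    using flipped_subset by blast
  then show "k = l"
    using flipped_eq_iff[OF assms] by blast
qed simp

lemma moved:
  assumes "k < 2 * n"
  shows "moved k < n" "if k < n then p (moved k) = k else q (moved k) = k - n"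
proof -
  have "moved k < n \<and> (if k < n then p (moved k) = k else q (moved k) = k - n)"
  proof (cases "k < n")
    case True
    then have "k \<in> p ` {..<n}"
      using bij_p unfolding bij_betw_def by simp
    then show ?thesis
      using True inv_into_into[of k p "{..<n}"] f_inv_into_f[of k p "{..<n}"] unfolding moved_def by simp
  next
    case False
    then have "k - n \<in> q ` {..<n}"
      using assms bij_q unfolding bij_betw_def by auto
    then show ?thesis
      using False inv_into_into[of "k - n" q "{..<n}"] f_inv_into_f[of "k - n" q "{..<n}"] unfolding moved_def by simp
  qed
  then show "moved k < n" "if k < n then p (moved k) = k else q (moved k) = k - n"
    by simp_all
qed

lemma eq_moved_iff:
  assumes "k < 2 * n" "j < n"
  shows "j = moved k \<longleftrightarrow> (if k < n then p j = k else q j = k - n)"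
  using moved[OF assms(1)] assms(2) p_eq_iff[of j "moved k"] q_eq_iff[of j "moved k"]
  by (auto split: if_splits)

lemma diff_coords_step:
  assumes "k < 2 * n"
  shows "diff_coords (vertex k) (vertex ((k + 1) mod (2 * n))) n = {moved k}"
proof -
  define k' where "k' = (k + 1) mod (2 * n)"
  have "(j \<in> flipped k) \<noteq> (j \<in> flipped k') \<longleftrightarrow> j = moved k" if "j < n" for j
  proof (cases "k + 1 < 2 * n")
    case True
    then have "k' = k + 1"
      unfolding k'_def by simp
    then show ?thesis
      using eq_moved_iff[OF assms that] that p_less[OF that] unfolding flipped_def by auto
  next
    case False
    then have "k + 1 = 2 * n"
      using assms by simp
    then have "k' = 0" "k - n = n - 1" "n \<le> k"
      using two_le_n unfolding k'_def by auto
    then show ?thesis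
      using eq_moved_iff[OF assms that] that q_less[OF that]
      unfolding flipped_high[OF \<open>n \<le> k\<close>] by (auto simp: flipped_def)
  qed
  then have "vertex k ! j \<noteq> vertex k' ! j \<longleftrightarrow> j = moved k" if "j < n" for j
    using that nth_vertex[OF that] by (cases "w j") auto
  then show ?thesis
    using moved(1)[OF assms] unfolding diff_coords_def k'_def by auto
qed

lemma length_vertices: "length vertices = 2 * n"
  unfolding vertices_def by simp

lemma nth_vertices: "k < 2 * n \<Longrightarrow> vertices ! k = vertex k"
  unfolding vertices_def by simp

lemma step_vertices:
  assumes "k < 2 * n"
  shows "{vertices ! k, vertices ! ((k + 1) mod length vertices)} = {vertex k, vertex ((k + 1) mod (2 * n))}"
  using assms two_le_n by (simp add: nth_vertices length_vertices)

lemma is_cycle_vertices: "is_cycle (cube_edges n) vertices"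
  unfolding is_cycle_def
proof (intro conjI allI impI)
  show "3 \<le> length vertices"
    using two_le_n by (simp add: length_vertices)
  show "distinct vertices"
    unfolding vertices_def distinct_map using vertex_eq_iff by (auto simp: inj_on_def)
  fix k assume "k < length vertices"
  then show "{vertices ! k, vertices ! ((k + 1) mod length vertices)} \<in> cube_edges n"
    using diff_coords_step step_vertices cube_edge_iff by (simp add: length_vertices)
qed

lemma colour_step:
  assumes "k < 2 * n"
  shows "edge_colour g {vertices ! k, vertices ! ((k + 1) mod (2 * n))} =
    2 * moved k + (if vertex k ! g (moved k) then 1 else 0)"
  using edge_colour_eq[OF length_vertex length_vertex diff_coords_step[OF assms]]
    g_partner[OF moved(1)[OF assms]] step_vertices[OF assms] by (simp add: length_vertices)

lemma nth_vertex_out: "k \<le> n \<Longrightarrow> j < n \<Longrightarrow> vertex k ! j = (w j \<noteq> (p j < k))"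
  by (simp add: nth_vertex flipped_def)

lemma nth_vertex_back: "n \<le> k \<Longrightarrow> j < n \<Longrightarrow> vertex k ! j = (w j \<noteq> (k - n \<le> q j))"
  by (simp add: nth_vertex flipped_high)

lemma partner_bit_differs:
  assumes "k < n" "n \<le> l" "l < 2 * n" "moved k = moved l"
  shows "vertex k ! g (moved k) \<noteq> vertex l ! g (moved k)"
proof -
  define i where "i = moved k"
  have "i < n" "p i = k" "q i = l - n"
    using moved[of k] moved[of l] assms unfolding i_def by auto
  then show ?thesis
    using g_partner[OF \<open>i < n\<close>] partner_order[OF \<open>i < n\<close>] assms(1,2)
    unfolding i_def[symmetric] by (auto simp: nth_vertex_out nth_vertex_back)
qed

lemma rainbow_vertices: "rainbow (edge_colour g) vertices"
  unfolding rainbow_iff_distinct_colours[OF is_cycle_vertices] distinct_map length_vertices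
proof (intro conjI inj_onI)
  fix k l
  assume "k \<in> set [0..<2 * n]" "l \<in> set [0..<2 * n]"
    and "edge_colour g {vertices ! k, vertices ! ((k + 1) mod (2 * n))} =
      edge_colour g {vertices ! l, vertices ! ((l + 1) mod (2 * n))}"
  then have kl: "k < 2 * n" "l < 2 * n" and colours: "2 * moved k + (if vertex k ! g (moved k) then 1 else 0) =
      2 * moved l + (if vertex l ! g (moved l) then 1 else 0)"
    using colour_step by auto
  then have same_dir: "moved k = moved l"
    by (auto split: if_splits; presburger)
  then have same_bit: "vertex k ! g (moved k) = vertex l ! g (moved k)"
    using colours by (auto split: if_splits)
  show "k = l"
  proof (rule ccontr)
    assume "k \<noteq> l"
    then have "k < n \<and> n \<le> l \<or> l < n \<and> n \<le> k"
      using moved(2)[OF kl(1)] moved(2)[OF kl(2)] same_dir kl by (auto split: if_splits)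
    then show False
      using partner_bit_differs[of k l] partner_bit_differs[of l k] same_dir same_bit kl by auto
  qed
qed simp

lemma vertex_in_vertices: "k < 2 * n \<Longrightarrow> vertex k \<in> set vertices"
  using nth_mem[of k vertices] by (simp add: length_vertices nth_vertices)

lemma in_vertices_if_prefix:
  assumes "length x = n" "m \<le> n" "\<And>j. j < n \<Longrightarrow> x ! j = (w j \<noteq> (p j < m))"
  shows "x \<in> set vertices"
proof -
  have "x = vertex m"
    using assms by (intro nth_equalityI) (auto simp: nth_vertex flipped_def)
  then show ?thesis
    using assms(2) two_le_n vertex_in_vertices by simp
qed

lemma in_vertices_if_suffix:
  assumes "length x = n" "m \<le> n" "\<And>j. j < n \<Longrightarrow> x ! j = (w j \<noteq> (m \<le> q j))"
  shows "x \<in> set vertices"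
proof (cases "m = n")
  case True
  have "x ! j = w j" if "j < n" for j
    using assms(3)[OF that] q_less[OF that] True by simp
  then have "x = vertex 0"
    using assms(1) by (intro nth_equalityI) (auto simp: nth_vertex flipped_def)
  then show ?thesis
    using two_le_n vertex_in_vertices by simp
next
  case False
  then have "x = vertex (n + m)"
    using assms by (intro nth_equalityI) (auto simp: nth_vertex flipped_high)
  then show ?thesis
    using assms(2) False vertex_in_vertices by simp
qed

end

lemma card_Collect_less_le: "card {j. j < n \<and> P j} \<le> n"
  using card_mono[of "{..<n}" "{j. j < n \<and> P j}"] by auto

definition key_rank :: "nat \<Rightarrow> (nat \<Rightarrow> 'a::linorder) \<Rightarrow> nat \<Rightarrow> nat" where
  "key_rank n key i = card {j. j < n \<and> key j < key i}"

lemma key_rank_less_key_rank_iff: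
  assumes "i < n" "j < n"
  shows "key_rank n key j < key_rank n key i \<longleftrightarrow> key j < key i"
proof
  assume "key j < key i"
  then have "{l. l < n \<and> key l < key j} \<subset> {l. l < n \<and> key l < key i}"
    using assms by auto
  then show "key_rank n key j < key_rank n key i"
    unfolding key_rank_def by (simp add: psubset_card_mono)
next
  assume "key_rank n key j < key_rank n key i"
  moreover have "key_rank n key i \<le> key_rank n key j" if "key i \<le> key j"
    using that unfolding key_rank_def by (intro card_mono) auto
  ultimately show "key j < key i"
    by (meson not_le)
qed

lemma key_rank_less: "i < n \<Longrightarrow> key_rank n key i < n"
proof -
  assume "i < n"
  then have "key_rank n key i \<le> card ({..<n} - {i})"
    unfolding key_rank_def by (intro card_mono) auto
  then show ?thesis
    using \<open>i < n\<close> by simp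
qed

lemma bij_key_rank:
  assumes "inj_on key {..<n}"
  shows "bij_betw (key_rank n key) {..<n} {..<n}"
proof -
  have "inj_on (key_rank n key) {..<n}"
  proof (rule inj_onI)
    fix i j assume "i \<in> {..<n}" "j \<in> {..<n}" "key_rank n key i = key_rank n key j"
    then have "key i = key j"
      using key_rank_less_key_rank_iff by (metis lessThan_iff linorder_neqE less_irrefl)
    then show "i = j"
      using assms \<open>i \<in> {..<n}\<close> \<open>j \<in> {..<n}\<close> by (simp add: inj_on_eq_iff)
  qed
  moreover have "key_rank n key ` {..<n} \<subseteq> {..<n}"
    using key_rank_less by auto
  ultimately show ?thesis
    unfolding bij_betw_def by (simp add: endo_inj_surj)
qed

lemma key_rank_eq_max:
  assumes "h < n" "\<And>j. j < n \<Longrightarrow> j \<noteq> h \<Longrightarrow> key j < key h"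
  shows "key_rank n key h = n - 1"
proof -
  have "{j. j < n \<and> key j < key h} = {..<n} - {h}"
    using assms by auto
  then show ?thesis
    unfolding key_rank_def using assms(1) by simp
qed

lemma key_rank_less_card_iff:
  assumes "i < n"
  shows "key_rank n key i < card {j. j < n \<and> key j < K} \<longleftrightarrow> key i < K"
proof
  assume "key i < K"
  then have "{j. j < n \<and> key j < key i} \<subset> {j. j < n \<and> key j < K}"
    using assms by auto
  then show "key_rank n key i < card {j. j < n \<and> key j < K}"
    unfolding key_rank_def by (simp add: psubset_card_mono)
next
  assume "key_rank n key i < card {j. j < n \<and> key j < K}"
  moreover have "card {j. j < n \<and> key j < K} \<le> key_rank n key i" if "K \<le> key i"
    using that unfolding key_rank_def by (intro card_mono) auto
  ultimately show "key i < K"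
    by (meson not_le)
qed

text \<open>Coordinates are paired as \<open>{0, 1}, {2, 3}, \<dots>\<close>; for odd \<open>n\<close> the last coordinate joins
  the block of \<open>0\<close> and \<open>1\<close>, and its partner is \<open>0\<close>.\<close>
definition partner :: "nat \<Rightarrow> nat \<Rightarrow> nat" where
  "partner n i = (if odd i then i - 1 else if i + 1 < n then i + 1 else 0)"

definition block :: "nat \<Rightarrow> nat \<Rightarrow> nat" where
  "block n i = (if odd n \<and> i = n - 1 then 0 else i div 2)"

lemma
  assumes "2 \<le> n" "i < n"
  shows partner_less: "partner n i < n" and partner_neq: "partner n i \<noteq> i"
    and block_partner: "block n (partner n i) = block n i"
  using assms unfolding partner_def block_def by (auto; presburger)+

lemma block_with_three_coords:
  assumes "i < n" "j < n" "k < n" "i \<noteq> j" "j \<noteq> k" "i \<noteq> k"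
    and "block n i = block n j" "block n j = block n k"
  shows "{i, j, k} = {0, 1, n - 1}"
proof -
  have "i \<in> {0, 1, n - 1}" "j \<in> {0, 1, n - 1}" "k \<in> {0, 1, n - 1}"
    using assms unfolding block_def by (auto split: if_splits; presburger)+
  then have "{i, j, k} \<subseteq> {0, 1, n - 1}" "card {i, j, k} = 3"
    using assms(4-6) by auto
  moreover have "card {0, 1, n - 1} \<le> 3"
    by (rule card_insert_le_m1) (simp_all add: card_insert_le_m1)
  ultimately show ?thesis
    by (metis card_seteq finite.emptyI finite.insertI)
qed

text \<open>Only the block \<open>{0, 1, n - 1}\<close> of odd \<open>n\<close> has three coordinates, so \<open>i0\<close> is taken from
  it whenever possible.\<close>
lemma obtain_coord_in_mixed_blocks:
  assumes "2 \<le> n" "\<exists>i<n. \<not> S i"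
  obtains i0 where "i0 < n" "\<not> S i0"
    "\<And>i j k. i < n \<Longrightarrow> j < n \<Longrightarrow> k < n \<Longrightarrow> i \<noteq> j \<Longrightarrow> j \<noteq> k \<Longrightarrow> i \<noteq> k \<Longrightarrow>
      block n i = block n j \<Longrightarrow> block n j = block n k \<Longrightarrow> S i \<Longrightarrow> \<not> S j \<Longrightarrow> \<not> S k \<Longrightarrow>
      i0 = j \<or> i0 = k"
proof (cases "\<exists>l\<in>{0, 1, n - 1}. \<not> S l")
  case True
  then obtain i0 where i0: "i0 \<in> {0, 1, n - 1}" "\<not> S i0"
    by blast
  have "i0 = j \<or> i0 = k"
    if "i < n" "j < n" "k < n" "i \<noteq> j" "j \<noteq> k" "i \<noteq> k" "block n i = block n j"
      "block n j = block n k" "S i" for i j k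
  proof -
    have "i0 \<in> {i, j, k}"
      using block_with_three_coords[OF that(1-8)] i0(1) by simp
    then show ?thesis
      using \<open>S i\<close> i0(2) by auto
  qed
  moreover have "i0 < n"
    using i0(1) assms(1) by auto
  ultimately show ?thesis
    using that i0(2) by blast
next
  case False
  obtain i0 where "i0 < n" "\<not> S i0"
    using assms(2) by blast
  moreover have "S j"
    if "i < n" "j < n" "k < n" "i \<noteq> j" "j \<noteq> k" "i \<noteq> k" "block n i = block n j"
      "block n j = block n k" for i j k
  proof -
    have "j \<in> {0, 1, n - 1}"
      using block_with_three_coords[OF that] by blast
    then show ?thesis
      using False by blast
  qed
  ultimately show ?thesis
    using that by blast
qed

text \<open>The class of a coordinate records which of the three vertices \<open>a\<close>, \<open>b\<close>, \<open>c\<close> differs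
  there from the other two (\<open>Odd_a\<close>, \<open>Odd_b\<close>, \<open>Odd_c\<close>) or, if they agree, whether the coordinate
  is flipped early or late. The flip cycle sorts the coordinates by class in the order
  \<open>Same_early, Odd_b, Odd_a, Same_late, Odd_c\<close> on the way out and
  \<open>Odd_b, Same_late, Same_early, Odd_a, Odd_c\<close> on the way back. Started from \<open>a\<close> with its
  \<open>Same_early\<close> coordinates flipped, it passes through \<open>a\<close> and \<open>b\<close> on the way out and through \<open>c\<close>
  on the way back.\<close>
datatype coord_class = Same_early | Same_late | Odd_a | Odd_b | Odd_c

definition classify :: "bool \<Rightarrow> bool \<Rightarrow> bool \<Rightarrow> bool \<Rightarrow> coord_class" where
  "classify early x y z =
    (if x = y \<and> y = z then (if early then Same_early else Same_late)
     else if y = z then Odd_a else if x = z then Odd_b else Odd_c)"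

fun out_rank :: "coord_class \<Rightarrow> nat" where
  "out_rank Same_early = 0"
| "out_rank Odd_b = 1"
| "out_rank Odd_a = 2"
| "out_rank Same_late = 3"
| "out_rank Odd_c = 4"

fun back_rank :: "coord_class \<Rightarrow> nat" where
  "back_rank Odd_b = 0"
| "back_rank Same_late = 1"
| "back_rank Same_early = 2"
| "back_rank Odd_a = 3"
| "back_rank Odd_c = 4"

lemma out_back_rank_agree:
  assumes "{u, v} \<noteq> {Same_early, Odd_b}" "{u, v} \<noteq> {Same_early, Same_late}" "{u, v} \<noteq> {Odd_a, Same_late}"
  shows "(out_rank u, i) < (out_rank v, j) \<longleftrightarrow> (back_rank u, i) < (back_rank v, j)"
  using assms by (cases u; cases v) (auto simp: doubleton_eq_iff)

lemma rank_Odd_c: "out_rank u = 4 \<longleftrightarrow> u = Odd_c" "back_rank u = 4 \<longleftrightarrow> u = Odd_c"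
  by (cases u; simp)+

lemma classify_bits:
  assumes "early \<longrightarrow> x = y \<and> y = z"
  shows "x = ((x \<noteq> early) \<noteq> (out_rank (classify early x y z) < 1))"
    and "y = ((x \<noteq> early) \<noteq> (out_rank (classify early x y z) < 3))"
    and "z = ((x \<noteq> early) \<noteq> (2 \<le> back_rank (classify early x y z)))"
  using assms by (cases x; cases y; cases z; cases early; simp add: classify_def)+

text \<open>The conclusion of \<open>mixed_blocks\<close> says that \<open>j\<close> or \<open>k\<close> is of class \<open>Odd_c\<close>.\<close>
locale three_vertices =
  fixes n :: nat and a b c :: "bool list"
  assumes two_le_n: "2 \<le> n" and length_a: "length a = n" and length_b: "length b = n"
    and length_c: "length c = n"
    and Odd_c_exists: "\<exists>i<n. a ! i = b ! i \<and> b ! i \<noteq> c ! i"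
    and mixed_blocks: "\<And>i j k. i < n \<Longrightarrow> j < n \<Longrightarrow> k < n \<Longrightarrow> i \<noteq> j \<Longrightarrow> j \<noteq> k \<Longrightarrow> i \<noteq> k \<Longrightarrow>
      block n i = block n j \<Longrightarrow> block n j = block n k \<Longrightarrow> a ! i = b ! i \<and> b ! i = c ! i \<Longrightarrow>
      \<not> (a ! j = b ! j \<and> b ! j = c ! j) \<Longrightarrow> \<not> (a ! k = b ! k \<and> b ! k = c ! k) \<Longrightarrow>
      a ! j = b ! j \<or> a ! k = b ! k"
begin

definition early :: "nat \<Rightarrow> bool" where
  "early i \<longleftrightarrow> a ! i = b ! i \<and> b ! i = c ! i \<and>
    (\<exists>j<n. block n j = block n i \<and> a ! j \<noteq> b ! j \<and> b ! j = c ! j)"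

definition cls :: "nat \<Rightarrow> coord_class" where
  "cls i = classify (early i) (a ! i) (b ! i) (c ! i)"

definition out_key :: "nat \<Rightarrow> nat \<times> nat" where
  "out_key i = (out_rank (cls i), i)"

definition back_key :: "nat \<Rightarrow> nat \<times> nat" where
  "back_key i = (back_rank (cls i), i)"

definition last_Odd_c :: nat where
  "last_Odd_c = Max {i. i < n \<and> cls i = Odd_c}"

lemma early_same: "early i \<longrightarrow> a ! i = b ! i \<and> b ! i = c ! i"
  unfolding early_def by simp

lemma cls_eq_Odd_c_iff: "cls i = Odd_c \<longleftrightarrow> a ! i = b ! i \<and> b ! i \<noteq> c ! i"
  unfolding cls_def classify_def by auto

lemma last_Odd_c: "last_Odd_c < n" "cls last_Odd_c = Odd_c"
  and le_last_Odd_c: "i < n \<Longrightarrow> cls i = Odd_c \<Longrightarrow> i \<le> last_Odd_c"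
proof -
  have "finite {i. i < n \<and> cls i = Odd_c}" "{i. i < n \<and> cls i = Odd_c} \<noteq> {}"
    using Odd_c_exists cls_eq_Odd_c_iff by auto
  then show "last_Odd_c < n" "cls last_Odd_c = Odd_c" "i < n \<Longrightarrow> cls i = Odd_c \<Longrightarrow> i \<le> last_Odd_c"
    unfolding last_Odd_c_def using Max_in Max_ge by blast+
qed

lemma key_less_key_last_Odd_c:
  assumes "j < n" "j \<noteq> last_Odd_c"
  shows "out_key j < out_key last_Odd_c" "back_key j < back_key last_Odd_c"
proof -
  have "out_rank (cls j) \<le> 4" "back_rank (cls j) \<le> 4"
    by (cases "cls j"; simp)+
  moreover have "cls j = Odd_c \<Longrightarrow> j < last_Odd_c"
    using le_last_Odd_c assms by force
  ultimately show "out_key j < out_key last_Odd_c" "back_key j < back_key last_Odd_c"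
    unfolding out_key_def back_key_def using last_Odd_c rank_Odd_c[of "cls j"]
    by (auto simp: le_less)
qed

text \<open>The early flag is constant on blocks, forced on blocks containing an \<open>Odd_a\<close> coordinate,
  and, by \<open>mixed_blocks\<close>, absent from blocks containing an \<open>Odd_b\<close> coordinate.\<close>
lemma partner_classes_agree:
  assumes "i < n"
  defines "j \<equiv> partner n i"
  shows "{cls j, cls i} \<noteq> {Same_early, Odd_b}" "{cls j, cls i} \<noteq> {Same_early, Same_late}"
    "{cls j, cls i} \<noteq> {Odd_a, Same_late}"
proof -
  have j: "j < n" "j \<noteq> i" "block n j = block n i"
    using partner_less partner_neq block_partner two_le_n assms(1) unfolding j_def by auto
  have not_early_Odd_b: False
    if lm: "l < n" "m < n" "l \<noteq> m" "block n l = block n m" "cls l = Same_early" "cls m = Odd_b" for l m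
  proof -
    obtain k where k: "k < n" "block n k = block n l" "a ! k \<noteq> b ! k" "b ! k = c ! k"
      using lm(5) unfolding cls_def classify_def early_def by (auto split: if_splits)
    have "a ! l = b ! l \<and> b ! l = c ! l" "a ! m \<noteq> b ! m" "a ! m = c ! m"
      using lm(5,6) unfolding cls_def classify_def by (auto split: if_splits)
    then show False
      using mixed_blocks[of l k m] k lm(1-4) by (cases "k = l"; cases "k = m") auto
  qed
  show "{cls j, cls i} \<noteq> {Same_early, Odd_b}"
    using not_early_Odd_b[of i j] not_early_Odd_b[of j i] j assms(1) by (auto simp: doubleton_eq_iff)
  show "{cls j, cls i} \<noteq> {Same_early, Same_late}" "{cls j, cls i} \<noteq> {Odd_a, Same_late}"
    using j assms(1) unfolding cls_def classify_def early_def
    by (auto simp: doubleton_eq_iff split: if_splits)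
qed

lemma partner_rank_order:
  assumes "i < n"
  shows "key_rank n out_key (partner n i) < key_rank n out_key i \<longleftrightarrow>
    key_rank n back_key (partner n i) < key_rank n back_key i"
proof -
  have "partner n i < n"
    using partner_less[OF two_le_n assms] .
  then show ?thesis
    using out_back_rank_agree[OF partner_classes_agree[OF assms], of "partner n i" i] assms
    by (simp add: key_rank_less_key_rank_iff out_key_def back_key_def)
qed

lemma inj_on_keys: "inj_on out_key {..<n}" "inj_on back_key {..<n}"
  unfolding out_key_def back_key_def inj_on_def by simp_all

sublocale flip_cycle n "key_rank n out_key" "key_rank n back_key" "\<lambda>i. a ! i \<noteq> early i" "partner n"
  last_Odd_c
proof
  show "2 \<le> n"
    by (rule two_le_n)
  show "bij_betw (key_rank n out_key) {..<n} {..<n}" "bij_betw (key_rank n back_key) {..<n} {..<n}"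
    using inj_on_keys by (simp_all add: bij_key_rank)
  show "last_Odd_c < n"
    by (rule last_Odd_c)
  show "key_rank n out_key last_Odd_c = n - 1" "key_rank n back_key last_Odd_c = n - 1"
    using key_rank_eq_max[OF last_Odd_c(1)] key_less_key_last_Odd_c by blast+
  fix i assume "i < n"
  then show "partner n i < n \<and> partner n i \<noteq> i"
    using partner_less partner_neq two_le_n by simp
  show "key_rank n out_key (partner n i) < key_rank n out_key i \<longleftrightarrow>
    key_rank n back_key (partner n i) < key_rank n back_key i"
    using partner_rank_order[OF \<open>i < n\<close>] .
qed

lemma out_key_rank_below_iff:
  "j < n \<Longrightarrow> key_rank n out_key j < card {l. l < n \<and> out_key l < (r, 0)} \<longleftrightarrow> out_rank (cls j) < r"
  using key_rank_less_card_iff[of j n out_key "(r, 0)"] by (simp add: out_key_def)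

lemma back_key_rank_below_iff:
  "j < n \<Longrightarrow> key_rank n back_key j < card {l. l < n \<and> back_key l < (r, 0)} \<longleftrightarrow> back_rank (cls j) < r"
  using key_rank_less_card_iff[of j n back_key "(r, 0)"] by (simp add: back_key_def)

lemma a_in_vertices: "a \<in> set vertices"
  using length_a card_Collect_less_le
proof (rule in_vertices_if_prefix)
  fix j assume "j < n"
  then show "a ! j = ((a ! j \<noteq> early j) \<noteq> (key_rank n out_key j < card {l. l < n \<and> out_key l < (1, 0)}))"
    using classify_bits(1)[OF early_same] by (simp add: out_key_rank_below_iff cls_def)
qed

lemma b_in_vertices: "b \<in> set vertices"
  using length_b card_Collect_less_le
proof (rule in_vertices_if_prefix)
  fix j assume "j < n"
  then show "b ! j = ((a ! j \<noteq> early j) \<noteq> (key_rank n out_key j < card {l. l < n \<and> out_key l < (3, 0)}))"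
    using classify_bits(2)[OF early_same] by (simp add: out_key_rank_below_iff cls_def)
qed

lemma c_in_vertices: "c \<in> set vertices"
  using length_c card_Collect_less_le
proof (rule in_vertices_if_suffix)
  fix j assume "j < n"
  then have "card {l. l < n \<and> back_key l < (2, 0)} \<le> key_rank n back_key j \<longleftrightarrow> 2 \<le> back_rank (cls j)"
    using back_key_rank_below_iff[of j 2] by (meson not_le)
  then show "c ! j = ((a ! j \<noteq> early j) \<noteq> (card {l. l < n \<and> back_key l < (2, 0)} \<le> key_rank n back_key j))"
    using classify_bits(3)[OF early_same] by (simp add: cls_def)
qed

lemma rainbow_cycle_through_abc:
  "\<exists>vs. is_cycle (cube_edges n) vs \<and> {a, b, c} \<subseteq> set vs \<and> rainbow (edge_colour (partner n)) vs"
  using is_cycle_vertices rainbow_vertices a_in_vertices b_in_vertices c_in_vertices by blast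

end

lemma three_vertices_if_coord:
  assumes "2 \<le> n" "length a = n" "length b = n" "length c = n"
    and "i0 < n" "a ! i0 = b ! i0" "b ! i0 \<noteq> c ! i0"
    and S: "\<And>i. S i \<longleftrightarrow> a ! i = b ! i \<and> b ! i = c ! i"
    and mixed: "\<And>i j k. i < n \<Longrightarrow> j < n \<Longrightarrow> k < n \<Longrightarrow> i \<noteq> j \<Longrightarrow> j \<noteq> k \<Longrightarrow> i \<noteq> k \<Longrightarrow>
      block n i = block n j \<Longrightarrow> block n j = block n k \<Longrightarrow> S i \<Longrightarrow> \<not> S j \<Longrightarrow> \<not> S k \<Longrightarrow> i0 = j \<or> i0 = k"
  shows "three_vertices n a b c"
proof
  show "\<exists>i<n. a ! i = b ! i \<and> b ! i \<noteq> c ! i"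
    using assms(5-7) by blast
  fix i j k
  assume "i < n" "j < n" "k < n" "i \<noteq> j" "j \<noteq> k" "i \<noteq> k" "block n i = block n j" "block n j = block n k"
    "a ! i = b ! i \<and> b ! i = c ! i" "\<not> (a ! j = b ! j \<and> b ! j = c ! j)" "\<not> (a ! k = b ! k \<and> b ! k = c ! k)"
  then have "i0 = j \<or> i0 = k"
    using mixed[of i j k] unfolding S by blast
  then show "a ! j = b ! j \<or> a ! k = b ! k"
    using assms(6) by blast
qed (use assms(1-4) in simp_all)

text \<open>Relabel the three vertices so that the coordinate given by
  \<open>obtain_coord_in_mixed_blocks\<close> is of class \<open>Odd_c\<close>.\<close>
lemma rainbow_cycle_through_three:
  assumes "2 \<le> n" "x \<in> cube_verts n" "y \<in> cube_verts n" "z \<in> cube_verts n" "x \<noteq> y"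
  shows "\<exists>vs. is_cycle (cube_edges n) vs \<and> {x, y, z} \<subseteq> set vs \<and> rainbow (edge_colour (partner n)) vs"
proof -
  have len: "length x = n" "length y = n" "length z = n"
    using assms(2-4) unfolding cube_verts_def by auto
  define S where "S i \<longleftrightarrow> x ! i = y ! i \<and> y ! i = z ! i" for i
  have "\<exists>i<n. x ! i \<noteq> y ! i"
    using assms(5) len(1,2) nth_equalityI[of x y] by (metis (full_types))
  then have "\<exists>i<n. \<not> S i"
    unfolding S_def by blast
  then obtain i0 where i0: "i0 < n" "\<not> S i0"
    and mixed: "\<And>i j k. i < n \<Longrightarrow> j < n \<Longrightarrow> k < n \<Longrightarrow> i \<noteq> j \<Longrightarrow> j \<noteq> k \<Longrightarrow> i \<noteq> k \<Longrightarrow>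
      block n i = block n j \<Longrightarrow> block n j = block n k \<Longrightarrow> S i \<Longrightarrow> \<not> S j \<Longrightarrow> \<not> S k \<Longrightarrow> i0 = j \<or> i0 = k"
    by (rule obtain_coord_in_mixed_blocks[OF assms(1)]) blast+
  consider "x ! i0 = y ! i0" "y ! i0 \<noteq> z ! i0" | "y ! i0 = z ! i0" "z ! i0 \<noteq> x ! i0"
    | "x ! i0 = z ! i0" "z ! i0 \<noteq> y ! i0"
    using i0(2) unfolding S_def by blast
  then show ?thesis
  proof cases
    case 1
    have "S i \<longleftrightarrow> x ! i = y ! i \<and> y ! i = z ! i" for i
      unfolding S_def ..
    from three_vertices_if_coord[OF assms(1) len i0(1) 1 this mixed] show ?thesis
      by (rule three_vertices.rainbow_cycle_through_abc)
  next
    case 2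
    have "S i \<longleftrightarrow> y ! i = z ! i \<and> z ! i = x ! i" for i
      unfolding S_def by blast
    from three_vertices_if_coord[OF assms(1) len(2,3,1) i0(1) 2 this mixed]
    have "\<exists>vs. is_cycle (cube_edges n) vs \<and> {y, z, x} \<subseteq> set vs \<and> rainbow (edge_colour (partner n)) vs"
      by (rule three_vertices.rainbow_cycle_through_abc)
    then show ?thesis
      by auto
  next
    case 3
    have "S i \<longleftrightarrow> x ! i = z ! i \<and> z ! i = y ! i" for i
      unfolding S_def by blast
    from three_vertices_if_coord[OF assms(1) len(1,3,2) i0(1) 3 this mixed]
    have "\<exists>vs. is_cycle (cube_edges n) vs \<and> {x, z, y} \<subseteq> set vs \<and> rainbow (edge_colour (partner n)) vs"
      by (rule three_vertices.rainbow_cycle_through_abc)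
    then show ?thesis
      by auto
  qed
qed

lemma flip_coord_commute: "flip_coord i (flip_coord j x) = flip_coord j (flip_coord i x)"
  by (rule nth_equalityI) (auto simp: nth_flip_coord)

section \<open>The values of \<open>crx\<close>\<close>

lemma diff_coords_square:
  assumes "length v = n" "i < n" "j < n"
  shows "diff_coords v (flip_coord i v) n = {i}"
    "diff_coords (flip_coord i v) (flip_coord j (flip_coord i v)) n = {j}"
    "diff_coords (flip_coord j (flip_coord i v)) (flip_coord j v) n = {i}"
    "diff_coords (flip_coord j v) v n = {j}"
proof -
  have "flip_coord i (flip_coord j (flip_coord i v)) = flip_coord j v"
    by (simp add: flip_coord_commute)
  moreover have "diff_coords (flip_coord j (flip_coord i v)) (flip_coord i (flip_coord j (flip_coord i v))) n = {i}"
    using assms by (intro diff_coords_flip_coord) simp_all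
  ultimately show "diff_coords (flip_coord j (flip_coord i v)) (flip_coord j v) n = {i}"
    by simp
  show "diff_coords (flip_coord j v) v n = {j}"
    using diff_coords_flip_coord[OF assms(1,3)] diff_coords_commute by metis
  show "diff_coords v (flip_coord i v) n = {i}"
    "diff_coords (flip_coord i v) (flip_coord j (flip_coord i v)) n = {j}"
    using assms by (simp_all add: diff_coords_flip_coord)
qed

lemma all_less_4_iff: "(\<forall>i<4. P i) \<longleftrightarrow> P 0 \<and> P 1 \<and> P 2 \<and> P (3::nat)"
  by (auto simp: less_Suc_eq numeral_eq_Suc)

lemma is_cycle_square:
  assumes "length v = n" "i < n" "j < n" "i \<noteq> j"
  shows "is_cycle (cube_edges n) [v, flip_coord i v, flip_coord j (flip_coord i v), flip_coord j v]"
proof -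
  note diffs = diff_coords_square[OF assms(1-3)]
  have "map (\<lambda>x. (x ! i, x ! j)) [v, flip_coord i v, flip_coord j (flip_coord i v), flip_coord j v] =
    [(v ! i, v ! j), (\<not> v ! i, v ! j), (\<not> v ! i, \<not> v ! j), (v ! i, \<not> v ! j)]"
    using assms by (simp add: nth_flip_coord)
  then have "distinct (map (\<lambda>x. (x ! i, x ! j)) [v, flip_coord i v, flip_coord j (flip_coord i v), flip_coord j v])"
    by simp
  then have "distinct [v, flip_coord i v, flip_coord j (flip_coord i v), flip_coord j v]"
    by (simp only: distinct_map)
  moreover have "length [v, flip_coord i v, flip_coord j (flip_coord i v), flip_coord j v] = 4"
    by simp
  ultimately show ?thesis
    unfolding is_cycle_def using diffs assms(1)
    by (simp only: all_less_4_iff) (simp add: cube_edge_iff)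
qed

text \<open>The four edges of the square in directions \<open>0\<close> and \<open>1\<close> get the colours
  \<open>v ! 1\<close>, \<open>2 + \<not> v ! 0\<close>, \<open>\<not> v ! 1\<close> and \<open>2 + v ! 0\<close>, all below \<open>4\<close>.\<close>
lemma rainbow_square:
  assumes "2 \<le> n" "length v = n"
  shows "rainbow (\<lambda>e. min 3 (edge_colour (partner n) e))
    [v, flip_coord 0 v, flip_coord 1 (flip_coord 0 v), flip_coord 1 v]"
proof -
  define v1 v2 v3 where "v1 = flip_coord 0 v" and "v2 = flip_coord 1 v1" and "v3 = flip_coord 1 v"
  have lengths: "length v1 = n" "length v2 = n" "length v3 = n"
    using assms(2) unfolding v1_def v2_def v3_def by simp_all
  have diffs: "diff_coords v v1 n = {0}" "diff_coords v1 v2 n = {1}"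
    "diff_coords v2 v3 n = {0}" "diff_coords v3 v n = {1}"
    using diff_coords_square[OF assms(2), of 0 1] assms(1) unfolding v1_def v2_def v3_def by simp_all
  have bits: "v1 ! 0 = (\<not> v ! 0)" "v2 ! 1 = (\<not> v ! 1)" "v3 ! 0 = v ! 0"
    using assms(1,2) unfolding v1_def v2_def v3_def by (simp_all add: nth_flip_coord)
  have "partner n 0 = 1" "partner n 1 = 0"
    using assms(1) unfolding partner_def by auto
  then have "edge_colour (partner n) {v, v1} = (if v ! 1 then 1 else 0)"
    "edge_colour (partner n) {v1, v2} = 2 + (if v ! 0 then 0 else 1)"
    "edge_colour (partner n) {v2, v3} = (if v ! 1 then 0 else 1)"
    "edge_colour (partner n) {v3, v} = 2 + (if v ! 0 then 1 else 0)"
    using edge_colour_eq[OF assms(2) lengths(1) diffs(1)] edge_colour_eq[OF lengths(1,2) diffs(2)]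
      edge_colour_eq[OF lengths(2,3) diffs(3)] edge_colour_eq[OF lengths(3) assms(2) diffs(4)]
      bits assms(1) by simp_all
  moreover have "is_cycle (cube_edges n) [v, v1, v2, v3]"
    using is_cycle_square[OF assms(2), of 0 1] assms(1) unfolding v1_def v2_def v3_def by simp
  ultimately show ?thesis
    unfolding v1_def[symmetric] v2_def[symmetric] v3_def[symmetric]
    by (simp add: rainbow_iff_distinct_colours upt_rec)
qed

lemma obtain_superset_with_card:
  assumes "finite V" "A \<subseteq> V" "card A \<le> k" "k \<le> card V"
  obtains S where "A \<subseteq> S" "S \<subseteq> V" "card S = k"
proof -
  have "finite A"
    using assms(1,2) by (rule finite_subset[rotated])
  then have "k - card A \<le> card (V - A)"
    using assms by (simp add: card_Diff_subset)
  then obtain T where T: "T \<subseteq> V - A" "card T = k - card A"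
    by (rule obtain_subset_with_card_n)
  moreover have "finite T"
    using T(1) assms(1) finite_subset by blast
  ultimately have "card (A \<union> T) = k"
    using \<open>finite A\<close> assms(3) by (subst card_Un_disjoint) auto
  then show ?thesis
    using that T(1) assms(2) by blast
qed

lemma crx_cube_1:
  assumes "2 \<le> n"
  shows "crx (cube_verts n) (cube_edges n) 1 = 4"
proof (rule crx_eqI[where c = "\<lambda>e. min 3 (edge_colour (partner n) e)" and T = "{replicate n False}"])
  show "\<forall>S. S \<subseteq> cube_verts n \<and> card S = 1 \<longrightarrow> (\<exists>vs. is_cycle (cube_edges n) vs \<and> S \<subseteq> set vs \<and>
    rainbow (\<lambda>e. min 3 (edge_colour (partner n) e)) vs)"
  proof (intro allI impI)
    fix S assume "S \<subseteq> cube_verts n \<and> card S = 1"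
    then obtain v where "S = {v}" "length v = n"
      unfolding cube_verts_def by (auto simp: card_1_singleton_iff)
    then show "\<exists>vs. is_cycle (cube_edges n) vs \<and> S \<subseteq> set vs \<and>
      rainbow (\<lambda>e. min 3 (edge_colour (partner n) e)) vs"
      using is_cycle_square[of v n 0 1] rainbow_square[of n v] assms
      by (intro exI[of _ "[v, flip_coord 0 v, flip_coord 1 (flip_coord 0 v), flip_coord 1 v]"]) simp
  qed
qed (auto simp: cube_verts_def cube_cycle_length_ge_4)

lemma rainbow_cycle_through_two_or_three:
  assumes "2 \<le> n" "S \<subseteq> cube_verts n" "card S = 2 \<or> card S = 3"
  shows "\<exists>vs. is_cycle (cube_edges n) vs \<and> S \<subseteq> set vs \<and> rainbow (edge_colour (partner n)) vs"
proof -
  obtain x y z where "S = {x, y, z}" "x \<noteq> y"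
  proof (cases "card S = 2")
    case True
    then obtain x y where "S = {x, y}" "x \<noteq> y"
      using card_2_iff by metis
    then show ?thesis
      using that[of x y y] by simp
  next
    case False
    then obtain x y z where "S = {x, y, z}" "x \<noteq> y"
      using assms(3) card_3_iff by metis
    then show ?thesis
      using that by blast
  qed
  then show ?thesis
    using rainbow_cycle_through_three[OF assms(1), of x y z] assms(2) by simp
qed

lemma crx_cube_2_3:
  assumes "2 \<le> n" "k = 2 \<or> k = 3"
  shows "crx (cube_verts n) (cube_edges n) k = 2 * n"
proof -
  define zeros ones where "zeros = replicate n False" and "ones = replicate n True"
  have antipodal: "\<forall>j<n. zeros ! j \<noteq> ones ! j"
    unfolding zeros_def ones_def by simp
  then have "zeros ! 0 \<noteq> ones ! 0"
    using assms(1) by simp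
  then have "zeros \<noteq> ones"
    by auto
  then have "card {zeros, ones} \<le> k"
    using assms(2) by auto
  moreover have "k \<le> card (cube_verts n)"
    using power_increasing[OF assms(1), of "2::nat"] assms(2) by (auto simp: card_cube_verts)
  moreover have "{zeros, ones} \<subseteq> cube_verts n"
    unfolding zeros_def ones_def cube_verts_def by simp
  ultimately obtain T where T: "{zeros, ones} \<subseteq> T" "T \<subseteq> cube_verts n" "card T = k"
    using obtain_superset_with_card[OF finite_cube_verts] by metis
  show ?thesis
  proof (rule crx_eqI[where c = "edge_colour (partner n)", OF _ _ T(2,3)])
    show "\<forall>e\<in>cube_edges n. edge_colour (partner n) e < 2 * n"
      using edge_colour_less by blast
    show "\<forall>S. S \<subseteq> cube_verts n \<and> card S = k \<longrightarrow>
      (\<exists>vs. is_cycle (cube_edges n) vs \<and> S \<subseteq> set vs \<and> rainbow (edge_colour (partner n)) vs)"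
      using rainbow_cycle_through_two_or_three[OF assms(1)] assms(2) by blast
    fix vs assume "is_cycle (cube_edges n) vs" "T \<subseteq> set vs"
    then show "2 * n \<le> length vs"
      using cube_cycle_length_ge_antipodal[of n vs zeros ones] T(1) antipodal by blast
  qed
qed

lemma crx_cube_large:
  assumes "2 \<le> n" "2 ^ (n - 1) \<le> k" "k \<le> 2 ^ n"
  shows "crx (cube_verts n) (cube_edges n) k = 2 ^ n"
proof -
  obtain c where c: "\<forall>e\<in>cube_edges n. c e < 2 ^ n" "rainbow c (gray_code n)"
    using rainbow_colouring_of_cycle[OF is_cycle_gray_code[OF assms(1)]] by (auto simp: length_gray_code)
  have "card (even_vertices n) = 2 ^ (n - 1)"
    using assms(1) by (simp add: card_even_vertices)
  moreover have "even_vertices n \<subseteq> cube_verts n"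
    unfolding even_vertices_def by blast
  ultimately obtain T where T: "even_vertices n \<subseteq> T" "T \<subseteq> cube_verts n" "card T = k"
    using obtain_superset_with_card[OF finite_cube_verts] assms(2,3) by (metis card_cube_verts)
  show ?thesis
  proof (rule crx_eqI[OF c(1) _ T(2,3)])
    show "\<forall>S. S \<subseteq> cube_verts n \<and> card S = k \<longrightarrow> (\<exists>vs. is_cycle (cube_edges n) vs \<and> S \<subseteq> set vs \<and> rainbow c vs)"
      using is_cycle_gray_code[OF assms(1)] c(2) set_gray_code by blast
    fix vs assume "is_cycle (cube_edges n) vs" "T \<subseteq> set vs"
    then have "2 * card (even_vertices n) \<le> length vs"
      using cube_cycle_length_ge_even_vertices T(1) by blast
    moreover have "2 * card (even_vertices n) = 2 ^ n"
      using \<open>card (even_vertices n) = 2 ^ (n - 1)\<close> assms(1) by (cases n) simp_all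
    ultimately show "2 ^ n \<le> length vs"
      by simp
  qed
qed

theorem theorem3p6:
  fixes n :: nat
  assumes "n \<ge> 2"
  shows "crx (cube_verts n) (cube_edges n) 1 = 4 \<and>
         crx (cube_verts n) (cube_edges n) 2 = 2 * n \<and>
         crx (cube_verts n) (cube_edges n) 3 = 2 * n \<and>
         (\<forall>k. 2 ^ (n - 1) \<le> k \<and> k \<le> 2 ^ n \<longrightarrow> crx (cube_verts n) (cube_edges n) k = 2 ^ n)"
  using crx_cube_1[OF assms] crx_cube_2_3[OF assms] crx_cube_large[OF assms] by simp

end
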